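(* Let $\mathcal{L},\mathcal{L}'$ be intuitionistic abstract logics and $h:\mathcal{L}\to\mathcal{L}'$ a strongly stable logic map. Then $h$ is a morphism of the associated Heyting algebras: for all $a,b\in Expr_{\mathcal{L}}$, $h(a\wedge b)=h(a)\wedge' h(b)$, $h(a\vee b)=h(a)\vee' h(b)$ and $h(a\to b)=h(a)\to' h(b)$, where equality is equality in the Heyting algebra $(Expr_{\mathcal{L}'},\le')$ (i.e. mutual $\le'$).
   Context: An abstract logic is a triple $\mathcal{L}=(Expr_{\mathcal{L}},Th_{\mathcal{L}},\mathcal{C}_{\mathcal{L}})$ where $Expr_{\mathcal{L}}$ is a set, $Th_{\mathcal{L}}$ a non-empty set of subsets of $Expr_{\mathcal{L}}$ (theories) closed under intersections of non-empty subfamilies, and $\mathcal{C}_{\mathcal{L}}$ a set of operations on $Expr_{\mathcal{L}}$. $\mathcal{L}$ is closed under union of chains if the union of every non-empty chain of theories is a theory. A theory $T$ is prime if $T=\bigcap\mathcal{T}$ with $\mathcal{T}\subseteq Th_{\mathcal{L}}$ non-empty finite implies $T\in\mathcal{T}$; totally prime if this holds for non-empty $\mathcal{T}$ of any size. $PTh_{\mathcal{L}}$, $TPTh_{\mathcal{L}}$ denote these sets. An intuitionistic abstract logic is one closed under union of chains with binary connectives $\vee,\wedge,\to$ and constants $\top,\bot$ such that for all $a,b$ and all $T\in TPTh_{\mathcal{L}}$: $a\vee b\in T$ iff $a\in T$ or $b\in T$; $a\wedge b\in T$ iff $a,b\in T$; $a\to b\in T$ iff for every totally prime $T'\supseteq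 T$, $a\in T'$ implies $b\in T'$; $\top$ lies in every theory and $\bot$ in none. The associated Heyting algebra is $(Expr_{\mathcal{L}},\le)$ with $a\le b$ iff every prime theory containing $a$ contains $b$, and operations $\wedge,\vee,\to,\bot,\top$ (elements with $a\le b\le a$ identified). A logic map $h:\mathcal{L}\to\mathcal{L}'$ is a function $Expr_{\mathcal{L}}\to Expr_{\mathcal{L}'}$ with $h^{-1}(T')\in Th_{\mathcal{L}}$ for all $T'\in Th_{\mathcal{L}'}$; it is strongly stable if $h^{-1}(P')\in PTh_{\mathcal{L}}$ for all $P'\in PTh_{\mathcal{L}'}$ and whenever $P'\in PTh_{\mathcal{L}'}$, $P\in PTh_{\mathcal{L}}$ with $h^{-1}(P')\subseteq P$, there is $Q'\in PTh_{\mathcal{L}'}$ with $P'\subseteq Q'$ and $h^{-1}(Q')=P$. *)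

theory Defs
  imports Main
begin

text \<open>An abstract logic with expression set UNIV :: 'a set, given by its set of theories Th.
  The operations C_L are represented by the explicitly given connectives.\<close>

definition abstract_logic :: "'a set set \<Rightarrow> bool" where
  "abstract_logic Th \<longleftrightarrow> Th \<noteq> {} \<and>
     (\<forall>F. F \<subseteq> Th \<and> F \<noteq> {} \<longrightarrow> \<Inter>F \<in> Th)"

definition closed_union_chains :: "'a set set \<Rightarrow> bool" where
  "closed_union_chains Th \<longleftrightarrow>
     (\<forall>C. C \<subseteq> Th \<and> C \<noteq> {} \<and> subset.chain Th C \<longrightarrow> \<Union>C \<in> Th)"

definition prime_theories :: "'a set set \<Rightarrow> 'a set set" where
  "prime_theories Th = {T \<in> Th. \<forall>F. F \<subseteq> Th \<and> F \<noteq> {} \<and> finite F \<and> T = \<Inter>F \<longrightarrow> T \<in> F}"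

definition tprime_theories :: "'a set set \<Rightarrow> 'a set set" where
  "tprime_theories Th = {T \<in> Th. \<forall>F. F \<subseteq> Th \<and> F \<noteq> {} \<and> T = \<Inter>F \<longrightarrow> T \<in> F}"

definition intuitionistic_logic ::
  "'a set set \<Rightarrow> ('a \<Rightarrow> 'a \<Rightarrow> 'a) \<Rightarrow> ('a \<Rightarrow> 'a \<Rightarrow> 'a) \<Rightarrow> ('a \<Rightarrow> 'a \<Rightarrow> 'a) \<Rightarrow> 'a \<Rightarrow> 'a \<Rightarrow> bool"
  where
  "intuitionistic_logic Th dis con imp tp bt \<longleftrightarrow>
     abstract_logic Th \<and> closed_union_chains Th \<and>
     (\<forall>a b. \<forall>T \<in> tprime_theories Th.
        (dis a b \<in> T \<longleftrightarrow> a \<in> T \<or> b \<in> T) \<and>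
        (con a b \<in> T \<longleftrightarrow> a \<in> T \<and> b \<in> T) \<and>
        (imp a b \<in> T \<longleftrightarrow> (\<forall>T' \<in> tprime_theories Th. T \<subseteq> T' \<longrightarrow> a \<in> T' \<longrightarrow> b \<in> T'))) \<and>
     (\<forall>T \<in> Th. tp \<in> T \<and> bt \<notin> T)"

definition heyting_le :: "'a set set \<Rightarrow> 'a \<Rightarrow> 'a \<Rightarrow> bool" where
  "heyting_le Th a b \<longleftrightarrow> (\<forall>P \<in> prime_theories Th. a \<in> P \<longrightarrow> b \<in> P)"

definition heyting_eq :: "'a set set \<Rightarrow> 'a \<Rightarrow> 'a \<Rightarrow> bool" where
  "heyting_eq Th a b \<longleftrightarrow> heyting_le Th a b \<and> heyting_le Th b a"

definition logic_map :: "'a set set \<Rightarrow> 'b set set \<Rightarrow> ('a \<Rightarrow> 'b) \<Rightarrow> bool" where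
  "logic_map Th Th' h \<longleftrightarrow> (\<forall>T' \<in> Th'. h -` T' \<in> Th)"

definition strongly_stable :: "'a set set \<Rightarrow> 'b set set \<Rightarrow> ('a \<Rightarrow> 'b) \<Rightarrow> bool" where
  "strongly_stable Th Th' h \<longleftrightarrow>
     (\<forall>P' \<in> prime_theories Th'. h -` P' \<in> prime_theories Th) \<and>
     (\<forall>P' \<in> prime_theories Th'. \<forall>P \<in> prime_theories Th. h -` P' \<subseteq> P \<longrightarrow>
        (\<exists>Q' \<in> prime_theories Th'. P' \<subseteq> Q' \<and> h -` Q' = P))"

end

theory Submission
  imports Defs
begin

text \<open>By Zorn's lemma (chains of theories have theories as unions) every theory is the
  intersection of the totally prime theories containing it. Hence the Heyting order can be
  tested on totally prime theories alone, the clauses for \<open>\<and>\<close> and \<open>\<rightarrow>\<close> hold in every theory,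
  and the clause for \<open>\<or>\<close> holds in every prime theory: a prime theory containing \<open>a \<or> b\<close> but
  neither \<open>a\<close> nor \<open>b\<close> would be the intersection of the totally prime theories above it
  containing \<open>a\<close> with those containing \<open>b\<close>.
  Now let \<open>Q'\<close> be a totally prime theory of the target logic. Its preimage is a theory, which
  transfers \<open>\<and>\<close>, and a prime theory, which transfers \<open>\<or>\<close>. For \<open>\<rightarrow>\<close>, strong stability
  realises every totally prime extension of the preimage of \<open>Q'\<close> as the preimage of a prime
  extension of \<open>Q'\<close>.\<close>

lemma prime_theories_subset: "prime_theories Th \<subseteq> Th"
  unfolding prime_theories_def by blast

lemma tprime_theories_subset: "tprime_theories Th \<subseteq> Th"
  unfolding tprime_theories_def by blast

lemma tprime_theories_subset_prime_theories: "tprime_theories Th \<subseteq> prime_theories Th"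
  unfolding tprime_theories_def prime_theories_def by blast

lemma exists_tprime_theory_avoiding:
  assumes chains: "closed_union_chains Th" and T: "T \<in> Th" and x: "x \<notin> T"
  obtains M where "M \<in> tprime_theories Th" "T \<subseteq> M" "x \<notin> M"
proof -
  let ?S = "{M \<in> Th. T \<subseteq> M \<and> x \<notin> M}"
  have "\<exists>M\<in>?S. \<forall>X\<in>?S. M \<subseteq> X \<longrightarrow> X = M"
  proof (rule subset_Zorn_nonempty)
    show "?S \<noteq> {}" using T x by blast
  next
    fix C assume C: "C \<noteq> {}" "subset.chain ?S C"
    then have "C \<subseteq> Th" "subset.chain Th C" "T \<subseteq> \<Union>C" "x \<notin> \<Union>C"
      unfolding subset.chain_def by blast+
    moreover have "\<Union>C \<in> Th"
      using chains C(1) calculation unfolding closed_union_chains_def by blast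
    ultimately show "\<Union>C \<in> ?S" by blast
  qed
  then obtain M where M: "M \<in> ?S" and maximal: "\<forall>X\<in>?S. M \<subseteq> X \<longrightarrow> X = M"
    by blast
  have "M \<in> tprime_theories Th"
    unfolding tprime_theories_def
  proof (intro CollectI conjI allI impI)
    show "M \<in> Th" using M by blast
    fix F assume "F \<subseteq> Th \<and> F \<noteq> {} \<and> M = \<Inter>F"
    then have F: "F \<subseteq> Th" "F \<noteq> {}" and M_eq: "M = \<Inter>F" by auto
    show "M \<in> F"
    proof (rule ccontr)
      assume "M \<notin> F"
      have "x \<in> X" if X: "X \<in> F" for X
      proof (rule ccontr)
        assume "x \<notin> X"
        moreover have "M \<subseteq> X" unfolding M_eq using X by (rule Inter_lower)
        ultimately have "X \<in> ?S" using F(1) X M by blast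
        then have "X = M" using maximal \<open>M \<subseteq> X\<close> by blast
        then show False using \<open>M \<notin> F\<close> X by blast
      qed
      then have "x \<in> M" unfolding M_eq by blast
      then show False using M by blast
    qed
  qed
  with M show thesis by (intro that) auto
qed

lemma theory_mem_iff_tprime:
  assumes "closed_union_chains Th" and "T \<in> Th"
  shows "x \<in> T \<longleftrightarrow> (\<forall>M\<in>tprime_theories Th. T \<subseteq> M \<longrightarrow> x \<in> M)"
  using exists_tprime_theory_avoiding[OF assms, of x] by blast

lemma heyting_le_iff_tprime:
  assumes chains: "closed_union_chains Th"
  shows "heyting_le Th x y \<longleftrightarrow> (\<forall>M\<in>tprime_theories Th. x \<in> M \<longrightarrow> y \<in> M)"
proof
  assume "heyting_le Th x y"
  then show "\<forall>M\<in>tprime_theories Th. x \<in> M \<longrightarrow> y \<in> M"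
    using tprime_theories_subset_prime_theories unfolding heyting_le_def by blast
next
  assume tprime: "\<forall>M\<in>tprime_theories Th. x \<in> M \<longrightarrow> y \<in> M"
  show "heyting_le Th x y"
    unfolding heyting_le_def
  proof (intro ballI impI)
    fix P assume "P \<in> prime_theories Th" "x \<in> P"
    then show "y \<in> P"
      using theory_mem_iff_tprime[OF chains] prime_theories_subset tprime by blast
  qed
qed

lemma heyting_eq_if_tprime:
  assumes "closed_union_chains Th" and "\<And>M. M \<in> tprime_theories Th \<Longrightarrow> x \<in> M \<longleftrightarrow> y \<in> M"
  shows "heyting_eq Th x y"
  using assms unfolding heyting_eq_def heyting_le_iff_tprime[OF assms(1)] by blast

lemma intuitionistic_logicD:
  assumes "intuitionistic_logic Th dis con imp tp bt"
  shows "abstract_logic Th" "closed_union_chains Th"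
    and "M \<in> tprime_theories Th \<Longrightarrow> dis a b \<in> M \<longleftrightarrow> a \<in> M \<or> b \<in> M"
    and "M \<in> tprime_theories Th \<Longrightarrow> con a b \<in> M \<longleftrightarrow> a \<in> M \<and> b \<in> M"
    and "M \<in> tprime_theories Th \<Longrightarrow> imp a b \<in> M \<longleftrightarrow>
           (\<forall>M'\<in>tprime_theories Th. M \<subseteq> M' \<longrightarrow> a \<in> M' \<longrightarrow> b \<in> M')"
  using assms unfolding intuitionistic_logic_def by blast+

lemma con_mem_theory_iff:
  assumes IL: "intuitionistic_logic Th dis con imp tp bt" and T: "T \<in> Th"
  shows "con a b \<in> T \<longleftrightarrow> a \<in> T \<and> b \<in> T"
proof -
  note mem_T = theory_mem_iff_tprime[OF intuitionistic_logicD(2)[OF IL] T]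
  show ?thesis
    unfolding mem_T[of "con a b"] mem_T[of a] mem_T[of b]
    using intuitionistic_logicD(4)[OF IL, of _ a b] by blast
qed

lemma imp_mem_theory_iff:
  assumes IL: "intuitionistic_logic Th dis con imp tp bt" and T: "T \<in> Th"
  shows "imp a b \<in> T \<longleftrightarrow> (\<forall>M\<in>tprime_theories Th. T \<subseteq> M \<longrightarrow> a \<in> M \<longrightarrow> b \<in> M)"
proof -
  note mem_T = theory_mem_iff_tprime[OF intuitionistic_logicD(2)[OF IL] T]
  note imp_tprime = intuitionistic_logicD(5)[OF IL, of _ a b]
  show ?thesis
    unfolding mem_T[of "imp a b"]
  proof (intro iffI ballI impI)
    fix M assume "\<forall>M\<in>tprime_theories Th. T \<subseteq> M \<longrightarrow> imp a b \<in> M"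
      and "M \<in> tprime_theories Th" "T \<subseteq> M" "a \<in> M"
    then show "b \<in> M" using imp_tprime by blast
  next
    fix M assume "\<forall>M\<in>tprime_theories Th. T \<subseteq> M \<longrightarrow> a \<in> M \<longrightarrow> b \<in> M"
      and "M \<in> tprime_theories Th" "T \<subseteq> M"
    then show "imp a b \<in> M" using imp_tprime by (meson order_trans)
  qed
qed

lemma imp_mem_theoryD:
  assumes IL: "intuitionistic_logic Th dis con imp tp bt"
    and T: "T \<in> Th" "imp a b \<in> T" and S: "S \<in> Th" "T \<subseteq> S" "a \<in> S"
  shows "b \<in> S"
proof -
  have "b \<in> M" if "M \<in> tprime_theories Th" "S \<subseteq> M" for M
    using that T S imp_mem_theory_iff[OF IL T(1), of a b] by blast
  then show ?thesis
    using theory_mem_iff_tprime[OF intuitionistic_logicD(2)[OF IL] S(1), of b] by blast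
qed

lemma prime_theory_mem_disjI:
  assumes inter: "abstract_logic Th" and chains: "closed_union_chains Th"
    and P: "P \<in> prime_theories Th"
    and a_or_b: "\<And>M. M \<in> tprime_theories Th \<Longrightarrow> P \<subseteq> M \<Longrightarrow> a \<in> M \<or> b \<in> M"
  shows "a \<in> P \<or> b \<in> P"
proof (rule ccontr)
  assume neither: "\<not> (a \<in> P \<or> b \<in> P)"
  have PT: "P \<in> Th" using P prime_theories_subset by blast
  note mem_P = theory_mem_iff_tprime[OF chains PT]
  define F where "F = {M \<in> tprime_theories Th. P \<subseteq> M}"
  obtain Ma where Ma: "Ma \<in> F" "a \<notin> Ma"
    using neither mem_P[of a] unfolding F_def by blast
  obtain Mb where Mb: "Mb \<in> F" "b \<notin> Mb"
    using neither mem_P[of b] unfolding F_def by blast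
  define A where "A = \<Inter>{M \<in> F. a \<in> M}"
  define B where "B = \<Inter>{M \<in> F. b \<in> M}"
  have inter_closed: "\<Inter>G \<in> Th" if "G \<subseteq> F" "G \<noteq> {}" for G
  proof -
    have "G \<subseteq> Th" using that(1) tprime_theories_subset unfolding F_def by blast
    then show ?thesis using inter that(2) unfolding abstract_logic_def by blast
  qed
  have "Mb \<in> {M \<in> F. a \<in> M}" "Ma \<in> {M \<in> F. b \<in> M}"
    using Ma Mb a_or_b unfolding F_def by blast+
  then have "A \<in> Th" "B \<in> Th"
    unfolding A_def B_def by (intro inter_closed; blast)+
  moreover have "P = \<Inter>{A, B}"
  proof
    show "P \<subseteq> \<Inter>{A, B}" unfolding A_def B_def F_def by blast
    show "\<Inter>{A, B} \<subseteq> P"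
    proof
      fix y assume "y \<in> \<Inter>{A, B}"
      then have "y \<in> M" if "M \<in> F" for M
        using that a_or_b[of M] unfolding A_def B_def F_def by blast
      then show "y \<in> P" unfolding mem_P[of y] F_def by blast
    qed
  qed
  ultimately have "P \<in> {A, B}"
    using P unfolding prime_theories_def by (auto elim!: allE[of _ "{A, B}"])
  moreover have "a \<in> A" "b \<in> B" unfolding A_def B_def by blast+
  ultimately show False using neither by blast
qed

lemma dis_mem_prime_theory_iff:
  assumes IL: "intuitionistic_logic Th dis con imp tp bt" and P: "P \<in> prime_theories Th"
  shows "dis a b \<in> P \<longleftrightarrow> a \<in> P \<or> b \<in> P"
proof -
  have PT: "P \<in> Th" using P prime_theories_subset by blast
  note mem_P = theory_mem_iff_tprime[OF intuitionistic_logicD(2)[OF IL] PT]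
  note dis_tprime = intuitionistic_logicD(3)[OF IL, of _ a b]
  show ?thesis
  proof
    assume "dis a b \<in> P"
    then show "a \<in> P \<or> b \<in> P"
      using prime_theory_mem_disjI[OF intuitionistic_logicD(1,2)[OF IL] P] mem_P dis_tprime
      by blast
  next
    assume "a \<in> P \<or> b \<in> P"
    then show "dis a b \<in> P"
      unfolding mem_P[of a] mem_P[of b] mem_P[of "dis a b"] using dis_tprime by blast
  qed
qed

lemma strongly_stable_vimage_prime:
  assumes "strongly_stable Th Th' h" and "Q \<in> prime_theories Th'"
  shows "h -` Q \<in> prime_theories Th"
  using assms unfolding strongly_stable_def by blast

lemma strongly_stable_liftE:
  assumes "strongly_stable Th Th' h" and "Q \<in> prime_theories Th'"
    and "M \<in> prime_theories Th" and "h -` Q \<subseteq> M"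
  obtains R where "R \<in> prime_theories Th'" "Q \<subseteq> R" "h -` R = M"
  using assms unfolding strongly_stable_def by blast

lemma logic_map_heyting_eq_con:
  assumes IL: "intuitionistic_logic Th dis con imp tp bt"
    and IL': "intuitionistic_logic Th' dis' con' imp' tp' bt'"
    and h: "logic_map Th Th' h"
  shows "heyting_eq Th' (h (con a b)) (con' (h a) (h b))"
proof (rule heyting_eq_if_tprime[OF intuitionistic_logicD(2)[OF IL']])
  fix Q assume Q: "Q \<in> tprime_theories Th'"
  then have "h -` Q \<in> Th"
    using h tprime_theories_subset unfolding logic_map_def by blast
  then show "h (con a b) \<in> Q \<longleftrightarrow> con' (h a) (h b) \<in> Q"
    using con_mem_theory_iff[OF IL, of "h -` Q" a b] intuitionistic_logicD(4)[OF IL' Q] by simp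
qed

lemma strongly_stable_heyting_eq_dis:
  assumes IL: "intuitionistic_logic Th dis con imp tp bt"
    and IL': "intuitionistic_logic Th' dis' con' imp' tp' bt'"
    and h: "strongly_stable Th Th' h"
  shows "heyting_eq Th' (h (dis a b)) (dis' (h a) (h b))"
proof (rule heyting_eq_if_tprime[OF intuitionistic_logicD(2)[OF IL']])
  fix Q assume Q: "Q \<in> tprime_theories Th'"
  then have "h -` Q \<in> prime_theories Th"
    using strongly_stable_vimage_prime[OF h] tprime_theories_subset_prime_theories by blast
  then show "h (dis a b) \<in> Q \<longleftrightarrow> dis' (h a) (h b) \<in> Q"
    using dis_mem_prime_theory_iff[OF IL, of "h -` Q" a b] intuitionistic_logicD(3)[OF IL' Q] by simp
qed

lemma strongly_stable_heyting_eq_imp: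
  assumes IL: "intuitionistic_logic Th dis con imp tp bt"
    and IL': "intuitionistic_logic Th' dis' con' imp' tp' bt'"
    and h: "strongly_stable Th Th' h"
  shows "heyting_eq Th' (h (imp a b)) (imp' (h a) (h b))"
proof (rule heyting_eq_if_tprime[OF intuitionistic_logicD(2)[OF IL']])
  fix Q assume Q: "Q \<in> tprime_theories Th'"
  have vimage_theory: "h -` R \<in> Th" if "R \<in> tprime_theories Th'" for R
    using that strongly_stable_vimage_prime[OF h] tprime_theories_subset_prime_theories
      prime_theories_subset by blast
  note imp'_clause = intuitionistic_logicD(5)[OF IL' Q, of "h a" "h b"]
  show "h (imp a b) \<in> Q \<longleftrightarrow> imp' (h a) (h b) \<in> Q"
  proof
    assume "h (imp a b) \<in> Q"
    then have "h b \<in> R" if "R \<in> tprime_theories Th'" "Q \<subseteq> R" "h a \<in> R" for R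
      using imp_mem_theoryD[OF IL vimage_theory[OF Q], of a b "h -` R"] vimage_theory[OF that(1)] that
      by auto
    then show "imp' (h a) (h b) \<in> Q" using imp'_clause by blast
  next
    assume imp'_mem: "imp' (h a) (h b) \<in> Q"
    have "b \<in> M" if M: "M \<in> tprime_theories Th" "h -` Q \<subseteq> M" "a \<in> M" for M
    proof -
      have "Q \<in> prime_theories Th'" "M \<in> prime_theories Th"
        using Q M(1) tprime_theories_subset_prime_theories by blast+
      then obtain R where R: "R \<in> prime_theories Th'" "Q \<subseteq> R" "h -` R = M"
        using strongly_stable_liftE[OF h _ _ M(2)] by blast
      have "h b \<in> R'" if "R' \<in> tprime_theories Th'" "R \<subseteq> R'" for R'
        using imp'_mem imp'_clause that R M(3) by blast
      then have "h b \<in> R"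
        using theory_mem_iff_tprime[OF intuitionistic_logicD(2)[OF IL'], of R "h b"] R(1)
          prime_theories_subset by blast
      then show "b \<in> M" using R(3) by blast
    qed
    then show "h (imp a b) \<in> Q"
      using imp_mem_theory_iff[OF IL vimage_theory[OF Q], of a b] by simp
  qed
qed

theorem lemma4p6:
  fixes Th :: "'a set set" and Th' :: "'b set set" and h :: "'a \<Rightarrow> 'b"
  assumes "intuitionistic_logic Th dis con imp tp bt"
    and "intuitionistic_logic Th' dis' con' imp' tp' bt'"
    and "logic_map Th Th' h"
    and "strongly_stable Th Th' h"
  shows "\<forall>a b. heyting_eq Th' (h (con a b)) (con' (h a) (h b)) \<and>
                heyting_eq Th' (h (dis a b)) (dis' (h a) (h b)) \<and>
                heyting_eq Th' (h (imp a b)) (imp' (h a) (h b))"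
  using logic_map_heyting_eq_con[OF assms(1-3)] strongly_stable_heyting_eq_dis[OF assms(1,2,4)]
    strongly_stable_heyting_eq_imp[OF assms(1,2,4)]
  by blast

end
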